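(* For every integer $m\ge2$, $$G_m(t,0)=(-1)^m\,t\,\Pi_{m-1}(t)\quad\text{and}\quad G_m\!\left(t,\tfrac12\right)=\frac{(-1)^m}{2^{m-1}}\widetilde{\Pi}_{m-1}(t).$$
   Context: $G_1(t,\beta)=-1$ and for $m\ge2$, $G_m(t,\beta)=[\beta(t-1)-(m-1)t]G_{m-1}(t,\beta)+t(t-1)\frac{\partial}{\partial t}G_{m-1}(t,\beta)$. The Euler–Frobenius polynomials satisfy $\Pi_0(t)=1$, $\Pi_{m+1}(t)=(1+mt)\Pi_m(t)+t(1-t)\Pi_m'(t)$, and the modified Euler–Frobenius polynomials satisfy $\widetilde\Pi_0(t)=1$, $\widetilde\Pi_{m+1}(t)=(1+(2m+1)t)\widetilde\Pi_m(t)+2t(1-t)\widetilde\Pi_m'(t)$. *)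

theory Defs
  imports "HOL-Computational_Algebra.Polynomial"
begin

text \<open>G m beta as a real polynomial in t.  G 0 is unused (set to 0);
  G 1 = -1; for m \<ge> 2 (m = n+2):
  G m = [beta(t-1) - (m-1) t] G (m-1) + t(t-1) d/dt G (m-1).\<close>
fun G :: "nat \<Rightarrow> real \<Rightarrow> real poly" where
  "G 0 \<beta> = 0"
| "G (Suc 0) \<beta> = -1"
| "G (Suc (Suc n)) \<beta> =
     [:-\<beta>, \<beta> - real (Suc n):] * G (Suc n) \<beta> + [:0, -1, 1:] * pderiv (G (Suc n) \<beta>)"

fun EF :: "nat \<Rightarrow> real poly" where
  "EF 0 = 1"
| "EF (Suc m) = [:1, real m:] * EF m + [:0, 1, -1:] * pderiv (EF m)"

fun EFmod :: "nat \<Rightarrow> real poly" where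
  "EFmod 0 = 1"
| "EFmod (Suc m) = [:1, 2 * real m + 1:] * EFmod m + [:0, 2, -2:] * pderiv (EFmod m)"

end

theory Submission
  imports Defs
begin

text \<open>At \<open>\<beta> = 0\<close> the recursion for \<open>G\<close> sends \<open>t p\<close> to \<open>-t\<close> times the
  Euler--Frobenius recursion applied to \<open>p\<close>, so the factor \<open>t\<close> persists and each step
  contributes a sign. At \<open>\<beta> = 1/2\<close> the recursion for \<open>G\<close> is \<open>-1/2\<close> times the
  modified Euler--Frobenius recursion, so each step contributes a factor \<open>-1/2\<close>.\<close>

lemma G_step_0_X_mult_eq_EF_step:
  fixes p :: "'a::idom poly"
  shows "[:0, -(1 + a):] * ([:0, 1:] * p) + [:0, -1, 1:] * pderiv ([:0, 1:] * p)
       = - ([:0, 1:] * ([:1, a:] * p + [:0, 1, -1:] * pderiv p))"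
  by (rule poly_eqI) (simp add: coeff_pCons pderiv_mult pderiv_pCons algebra_simps split: nat.split)

lemma G_step_half_eq_EFmod_step:
  fixes p :: "'a::field_char_0 poly"
  shows "[:-1/2, 1/2 - (1 + a):] * p + [:0, -1, 1:] * pderiv p
       = smult (-1/2) ([:1, 2 * a + 1:] * p + [:0, 2, -2:] * pderiv p)"
  by (rule poly_eqI) (simp add: coeff_pCons field_simps split: nat.split)

lemma G_zero_eq_EF: "G (Suc (Suc n)) 0 = smult ((-1) ^ n) ([:0, 1:] * EF (Suc n))"
proof (induction n)
  case 0
  show ?case by (simp add: pderiv_pCons one_pCons)
next
  case (Suc n)
  have "G (Suc (Suc (Suc n))) 0 = smult ((-1) ^ n)
      ([:0, -(1 + real (Suc n)):] * ([:0, 1:] * EF (Suc n))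
       + [:0, -1, 1:] * pderiv ([:0, 1:] * EF (Suc n)))"
    by (simp only: G.simps(3)[of "Suc n"] Suc.IH pderiv_smult mult_smult_right smult_add_right) simp
  also have "\<dots> = smult ((-1) ^ Suc n) ([:0, 1:] * EF (Suc (Suc n)))"
    by (simp only: G_step_0_X_mult_eq_EF_step EF.simps(2)[of "Suc n"]
        power_Suc mult_minus1 smult_minus_left smult_minus_right)
  finally show ?case .
qed

lemma G_half_eq_EFmod: "G (Suc n) (1/2) = smult ((-1) ^ Suc n / 2 ^ n) (EFmod n)"
proof (induction n)
  case 0
  show ?case by (simp add: one_pCons)
next
  case (Suc n)
  have "G (Suc (Suc n)) (1/2) = smult ((-1) ^ Suc n / 2 ^ n)
      ([:-1/2, 1/2 - (1 + real n):] * EFmod n + [:0, -1, 1:] * pderiv (EFmod n))"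
    by (simp only: G.simps(3)[of n] Suc.IH pderiv_smult mult_smult_right smult_add_right) simp
  also have "\<dots> = smult ((-1) ^ Suc (Suc n) / 2 ^ Suc n) (EFmod (Suc n))"
  proof -
    have "(-1) ^ Suc n / 2 ^ n * (-1/2) = ((-1) ^ Suc (Suc n) / 2 ^ Suc n :: real)"
      by simp
    then show ?thesis
      by (simp only: G_step_half_eq_EFmod_step EFmod.simps(2)[of n] smult_smult)
  qed
  finally show ?case .
qed

theorem lemma5p1:
  fixes m :: nat
  assumes "m \<ge> 2"
  shows "G m 0 = smult ((-1) ^ m) ([:0, 1:] * EF (m - 1)) \<and>
         G m (1/2) = smult ((-1) ^ m / 2 ^ (m - 1)) (EFmod (m - 1))"
proof -
  obtain n where "m = Suc (Suc n)"
    using assms by (metis add_2_eq_Suc le_Suc_ex)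
  then show ?thesis
    using G_zero_eq_EF[of n] G_half_eq_EFmod[of "Suc n"] by simp
qed

end
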